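(* Let $B$ be a soluble skew left brace and let $I$ be a maximal ideal of $B$ (a proper ideal not contained in any other proper ideal). Then $B/I$ is an abelian brace and its group $(B/I,+)=(B/I,\cdot)$ is cyclic of prime order.
   Context: A skew left brace (brace) is a set $B$ with two group structures $(B,+)$ and $(B,\cdot)$ with $a(b+c)=ab-a+ac$; $\lambda_a(b)=-a+ab$. An ideal is a subset that is a normal subgroup of both groups and $\lambda_b$-invariant for all $b$. For ideals $I,J$, $[I,J]$ is the smallest ideal containing $[I,J]_+$, $[I,J]_\cdot$ and all $ij-(i+j)$; $B$ is abelian if $[B,B]=0$. $B$ is soluble if there is a chain $B=I_0\supseteq\cdots\supseteq I_n=0$ with each $I_i$ an ideal of the brace $I_{i-1}$ and $I_{i-1}/I_i$ abelian. *)

theory Defs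
  imports "HOL-Algebra.Algebra" "HOL-Computational_Algebra.Primes"
begin

text \<open>A skew left brace is given by two group structures A = (B,+) and M = (B,.)
  on the same carrier B, written multiplicatively in HOL-Algebra notation.
  The brace axiom a(b+c) = ab - a + ac.\<close>

definition skew_brace :: "'a monoid \<Rightarrow> 'a monoid \<Rightarrow> bool" where
  "skew_brace A M \<longleftrightarrow> group A \<and> group M \<and> carrier A = carrier M \<and>
     (\<forall>a\<in>carrier A. \<forall>b\<in>carrier A. \<forall>c\<in>carrier A.
        a \<otimes>\<^bsub>M\<^esub> (b \<otimes>\<^bsub>A\<^esub> c) =
        (a \<otimes>\<^bsub>M\<^esub> b) \<otimes>\<^bsub>A\<^esub> inv\<^bsub>A\<^esub> a \<otimes>\<^bsub>A\<^esub> (a \<otimes>\<^bsub>M\<^esub> c))"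

definition brace_lambda :: "'a monoid \<Rightarrow> 'a monoid \<Rightarrow> 'a \<Rightarrow> 'a \<Rightarrow> 'a" where
  "brace_lambda A M b x = inv\<^bsub>A\<^esub> b \<otimes>\<^bsub>A\<^esub> (b \<otimes>\<^bsub>M\<^esub> x)"

definition brace_ideal :: "'a monoid \<Rightarrow> 'a monoid \<Rightarrow> 'a set \<Rightarrow> bool" where
  "brace_ideal A M I \<longleftrightarrow> I \<lhd> A \<and> I \<lhd> M \<and>
     (\<forall>b\<in>carrier A. \<forall>x\<in>I. brace_lambda A M b x \<in> I)"

definition brace_comm_gens :: "'a monoid \<Rightarrow> 'a monoid \<Rightarrow> 'a set \<Rightarrow> 'a set \<Rightarrow> 'a set" where
  "brace_comm_gens A M I J =
     {i \<otimes>\<^bsub>A\<^esub> j \<otimes>\<^bsub>A\<^esub> inv\<^bsub>A\<^esub> i \<otimes>\<^bsub>A\<^esub> inv\<^bsub>A\<^esub> j | i j. i \<in> I \<and> j \<in> J}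
   \<union> {i \<otimes>\<^bsub>M\<^esub> j \<otimes>\<^bsub>M\<^esub> inv\<^bsub>M\<^esub> i \<otimes>\<^bsub>M\<^esub> inv\<^bsub>M\<^esub> j | i j. i \<in> I \<and> j \<in> J}
   \<union> {(i \<otimes>\<^bsub>M\<^esub> j) \<otimes>\<^bsub>A\<^esub> inv\<^bsub>A\<^esub> (i \<otimes>\<^bsub>A\<^esub> j) | i j. i \<in> I \<and> j \<in> J}"

definition brace_comm :: "'a monoid \<Rightarrow> 'a monoid \<Rightarrow> 'a set \<Rightarrow> 'a set \<Rightarrow> 'a set" where
  "brace_comm A M I J = \<Inter>{K. brace_ideal A M K \<and> brace_comm_gens A M I J \<subseteq> K}"

definition brace_abelian :: "'a monoid \<Rightarrow> 'a monoid \<Rightarrow> bool" where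
  "brace_abelian A M \<longleftrightarrow> brace_comm A M (carrier A) (carrier A) = {\<one>\<^bsub>A\<^esub>}"

definition brace_soluble :: "'a monoid \<Rightarrow> 'a monoid \<Rightarrow> bool" where
  "brace_soluble A M \<longleftrightarrow> (\<exists>(n::nat) (I::nat \<Rightarrow> 'a set).
     I 0 = carrier A \<and> I n = {\<one>\<^bsub>A\<^esub>} \<and>
     (\<forall>i<n. I (Suc i) \<subseteq> I i \<and>
        brace_ideal (A\<lparr>carrier := I i\<rparr>) (M\<lparr>carrier := I i\<rparr>) (I (Suc i)) \<and>
        brace_abelian (A\<lparr>carrier := I i\<rparr> Mod I (Suc i)) (M\<lparr>carrier := I i\<rparr> Mod I (Suc i))))"

definition brace_maximal_ideal :: "'a monoid \<Rightarrow> 'a monoid \<Rightarrow> 'a set \<Rightarrow> bool" where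
  "brace_maximal_ideal A M I \<longleftrightarrow> brace_ideal A M I \<and> I \<noteq> carrier A \<and>
     (\<forall>J. brace_ideal A M J \<and> J \<noteq> carrier A \<and> I \<subseteq> J \<longrightarrow> J = I)"

end

theory Submission
  imports Defs
begin

text \<open>Let B = I_0 \<supseteq> ... \<supseteq> I_n = 0 be a soluble series and \<pi> : B \<rightarrow> B/I the projection.
  Since \<pi>(I_0) = B/I and \<pi>(I_n) = 0 \<noteq> B/I, there is a k with \<pi>(I_k) = B/I but
  \<pi>(I_(k+1)) \<noteq> B/I. As \<pi> maps I_k onto B/I, the image \<pi>(I_(k+1)) is an ideal of B/I, and by
  maximality of I the brace B/I has no ideals besides 0 and itself. Hence I_(k+1) \<subseteq> I, so B/I
  is a quotient of the abelian brace I_k/I_(k+1): in B/I the two operations coincide and are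
  commutative. Then every subgroup of B/I is an ideal, so B/I has no proper nontrivial
  subgroups and is cyclic of prime order.\<close>

section \<open>Groups\<close>

lemma (in group) commutator_eq_one_iff:
  assumes x: "x \<in> carrier G" and y: "y \<in> carrier G"
  shows "x \<otimes> y \<otimes> inv x \<otimes> inv y = \<one> \<longleftrightarrow> x \<otimes> y = y \<otimes> x"
proof -
  have "x \<otimes> y \<otimes> inv x \<otimes> inv y = (x \<otimes> y) \<otimes> inv (y \<otimes> x)"
    using x y by (simp add: inv_mult_group m_assoc)
  then show ?thesis
    using x y by (metis inv_closed inv_equality m_closed r_inv inv_inv)
qed

lemma (in group) ord_ne_zero_if_generates:
  assumes g: "g \<in> carrier G" "g \<noteq> \<one>"
    and gen: "\<And>x. x \<in> carrier G \<Longrightarrow> x \<noteq> \<one> \<Longrightarrow> generate G {x} = carrier G"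
  shows "ord g \<noteq> 0"
proof (cases "g [^] (2::nat) = \<one>")
  case True
  then show ?thesis using ord_eq_0[OF g(1)] by auto
next
  case False
  have "g \<in> generate G {g [^] (2::nat)}"
    using gen[OF nat_pow_closed[OF g(1)] False] g by simp
  then obtain k :: int where "g = (g [^] (2::nat)) [^] k"
    using generate_pow[OF nat_pow_closed[OF g(1)]] by auto
  also have "\<dots> = g [^] (2 * k)"
    using int_pow_pow[OF g(1), of 2 k] int_pow_int[of G g 2] by simp
  finally have "g [^] (1::int) = g [^] (2 * k)" using g by simp
  then have "int (ord g) dvd 2 * k - 1" using int_pow_eq[OF g(1)] by blast
  moreover have "2 * k - 1 \<noteq> 0" by presburger
  ultimately show ?thesis by auto
qed

text \<open>Every nontrivial element generates the group, so all of them have the same order;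
  for a proper divisor d of ord g the element g [^] d would have the smaller order ord g div d.\<close>

lemma (in group) prime_ord_if_generates:
  assumes g: "g \<in> carrier G" "g \<noteq> \<one>"
    and gen: "\<And>x. x \<in> carrier G \<Longrightarrow> x \<noteq> \<one> \<Longrightarrow> generate G {x} = carrier G"
  shows "Factorial_Ring.prime (ord g)"
proof -
  have ord_eq: "ord x = order G" if "x \<in> carrier G" "x \<noteq> \<one>" for x
    using generate_pow_card[OF that(1)] gen[OF that] unfolding order_def by simp
  have ord_ne_0: "ord g \<noteq> 0" using ord_ne_zero_if_generates[OF g gen] .
  show ?thesis unfolding prime_nat_iff
  proof (intro conjI allI impI)
    show "1 < ord g" using ord_ne_0 ord_eq_1[OF g(1)] g(2) by simp
    fix d assume d: "d dvd ord g"
    show "d = 1 \<or> d = ord g"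
    proof (rule ccontr)
      assume nd: "\<not> (d = 1 \<or> d = ord g)"
      have d0: "d \<noteq> 0" using d ord_ne_0 by auto
      show False
      proof (cases "g [^] d = \<one>")
        case True
        then have "ord g dvd d" using pow_eq_id[OF g(1)] by simp
        then show False using d nd dvd_antisym by blast
      next
        case False
        have "ord g div d = ord g"
          using ord_pow[OF g(1) d d0] ord_eq[OF nat_pow_closed[OF g(1)] False] ord_eq[OF g] by simp
        moreover have "d > 1" using nd d0 by simp
        ultimately show False using ord_ne_0 by (metis div_less_dividend neq0_conv less_irrefl)
      qed
    qed
  qed
qed

lemma (in group) prime_cyclic_if_no_proper_subgroups:
  assumes nontrivial: "carrier G \<noteq> {\<one>}"
    and no_proper: "\<And>H. subgroup H G \<Longrightarrow> H = {\<one>} \<or> H = carrier G"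
  shows "cyclic_group G \<and> Factorial_Ring.prime (order G)"
proof -
  have gen: "generate G {x} = carrier G" if "x \<in> carrier G" "x \<noteq> \<one>" for x
    using no_proper[OF generate_is_subgroup] generate.incl[of x "{x}" G] that by auto
  obtain g where g: "g \<in> carrier G" "g \<noteq> \<one>" using nontrivial one_closed by blast
  have "carrier G = range (\<lambda>n::int. g [^] n)"
    using gen[OF g] generate_pow[OF g(1)] by (auto simp: image_def)
  then have "cyclic_group G" using cyclic_group g(1) by blast
  moreover have "ord g = order G"
    using generate_pow_card[OF g(1)] gen[OF g] unfolding order_def by simp
  ultimately show ?thesis using prime_ord_if_generates[OF g gen] by simp
qed

lemma (in group_hom) normal_vimage:
  assumes "N \<lhd> H"
  shows "{x \<in> carrier G. h x \<in> N} \<lhd> G"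
proof -
  interpret N: normal N H by fact
  have "subgroup {x \<in> carrier G. h x \<in> N} G"
    by (rule G.subgroupI) (auto simp: N.m_inv_closed N.m_closed)
  then show ?thesis
    unfolding G.normal_inv_iff using N.inv_op_closed2 by auto
qed

lemma first_failure_step: "P 0 \<Longrightarrow> \<not> P n \<Longrightarrow> \<exists>k<n. P k \<and> \<not> P (Suc k)"
  by (induction n) (auto intro: less_SucI)

section \<open>Skew braces\<close>

locale brace = A: group A + M: group M for A M :: "'a monoid" +
  assumes carrier_M: "carrier M = carrier A"
    and left_distrib: "\<And>a b c. \<lbrakk>a \<in> carrier A; b \<in> carrier A; c \<in> carrier A\<rbrakk> \<Longrightarrow>
        a \<otimes>\<^bsub>M\<^esub> (b \<otimes>\<^bsub>A\<^esub> c) = (a \<otimes>\<^bsub>M\<^esub> b) \<otimes>\<^bsub>A\<^esub> inv\<^bsub>A\<^esub> a \<otimes>\<^bsub>A\<^esub> (a \<otimes>\<^bsub>M\<^esub> c)"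

lemma brace_iff_skew_brace: "brace A M \<longleftrightarrow> skew_brace A M"
  unfolding skew_brace_def brace_def brace_axioms_def by auto

context brace
begin

abbreviation lam where "lam \<equiv> brace_lambda A M"

lemma M_mult_closed [simp]: "a \<in> carrier A \<Longrightarrow> b \<in> carrier A \<Longrightarrow> a \<otimes>\<^bsub>M\<^esub> b \<in> carrier A"
  using M.m_closed carrier_M by auto

lemma M_inv_closed [simp]: "a \<in> carrier A \<Longrightarrow> inv\<^bsub>M\<^esub> a \<in> carrier A"
  using M.inv_closed carrier_M by auto

lemma M_one_eq: "\<one>\<^bsub>M\<^esub> = \<one>\<^bsub>A\<^esub>"
proof -
  let ?x = "\<one>\<^bsub>A\<^esub> \<otimes>\<^bsub>M\<^esub> \<one>\<^bsub>A\<^esub>"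
  have "?x = ?x \<otimes>\<^bsub>A\<^esub> ?x"
    using left_distrib[of "\<one>\<^bsub>A\<^esub>" "\<one>\<^bsub>A\<^esub>" "\<one>\<^bsub>A\<^esub>"] by simp
  then have "?x = \<one>\<^bsub>A\<^esub>" by (metis A.one_closed A.r_cancel_one' M_mult_closed)
  then show ?thesis using carrier_M by (metis A.one_closed M.r_cancel_one')
qed

lemma M_r_one [simp]: "a \<in> carrier A \<Longrightarrow> a \<otimes>\<^bsub>M\<^esub> \<one>\<^bsub>A\<^esub> = a"
  using M_one_eq carrier_M M.r_one by force

lemma M_l_one [simp]: "a \<in> carrier A \<Longrightarrow> \<one>\<^bsub>A\<^esub> \<otimes>\<^bsub>M\<^esub> a = a"
  using M_one_eq carrier_M M.l_one by force

lemma lambda_closed [simp]: "b \<in> carrier A \<Longrightarrow> x \<in> carrier A \<Longrightarrow> lam b x \<in> carrier A"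
  unfolding brace_lambda_def by simp

lemma M_mult_eq_A_mult_lambda: "a \<in> carrier A \<Longrightarrow> x \<in> carrier A \<Longrightarrow> a \<otimes>\<^bsub>M\<^esub> x = a \<otimes>\<^bsub>A\<^esub> lam a x"
  unfolding brace_lambda_def by (simp add: A.m_assoc[symmetric])

lemma M_mult_A_inv:
  assumes a: "a \<in> carrier A" and b: "b \<in> carrier A"
  shows "a \<otimes>\<^bsub>M\<^esub> inv\<^bsub>A\<^esub> b = a \<otimes>\<^bsub>A\<^esub> inv\<^bsub>A\<^esub> (a \<otimes>\<^bsub>M\<^esub> b) \<otimes>\<^bsub>A\<^esub> a"
proof -
  define p where "p = a \<otimes>\<^bsub>M\<^esub> b"
  define r where "r = a \<otimes>\<^bsub>M\<^esub> inv\<^bsub>A\<^esub> b"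
  have p: "p \<in> carrier A" and r: "r \<in> carrier A" using a b by (auto simp: p_def r_def)
  have "a = p \<otimes>\<^bsub>A\<^esub> inv\<^bsub>A\<^esub> a \<otimes>\<^bsub>A\<^esub> r"
    using left_distrib[of a b "inv\<^bsub>A\<^esub> b"] a b by (simp add: p_def r_def)
  then have "r = inv\<^bsub>A\<^esub> (p \<otimes>\<^bsub>A\<^esub> inv\<^bsub>A\<^esub> a) \<otimes>\<^bsub>A\<^esub> a"
    using a p r A.inv_solve_left[of r "p \<otimes>\<^bsub>A\<^esub> inv\<^bsub>A\<^esub> a" a] by simp
  also have "\<dots> = a \<otimes>\<^bsub>A\<^esub> inv\<^bsub>A\<^esub> p \<otimes>\<^bsub>A\<^esub> a"
    using a p by (simp add: A.inv_mult_group)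
  finally show ?thesis unfolding p_def r_def .
qed

lemma lambda_mult:
  assumes a: "a \<in> carrier A" and b: "b \<in> carrier A" and x: "x \<in> carrier A"
  shows "lam a (lam b x) = lam (a \<otimes>\<^bsub>M\<^esub> b) x"
proof -
  have "lam a (lam b x) = inv\<^bsub>A\<^esub> a \<otimes>\<^bsub>A\<^esub>
      ((a \<otimes>\<^bsub>M\<^esub> inv\<^bsub>A\<^esub> b) \<otimes>\<^bsub>A\<^esub> inv\<^bsub>A\<^esub> a \<otimes>\<^bsub>A\<^esub> (a \<otimes>\<^bsub>M\<^esub> (b \<otimes>\<^bsub>M\<^esub> x)))"
    unfolding brace_lambda_def using left_distrib[of a "inv\<^bsub>A\<^esub> b" "b \<otimes>\<^bsub>M\<^esub> x"] a b x by simp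
  also have "\<dots> = inv\<^bsub>A\<^esub> (a \<otimes>\<^bsub>M\<^esub> b) \<otimes>\<^bsub>A\<^esub> (a \<otimes>\<^bsub>M\<^esub> (b \<otimes>\<^bsub>M\<^esub> x))"
    using a b x by (simp add: M_mult_A_inv A.m_assoc flip: A.m_assoc[of "inv\<^bsub>A\<^esub> a" a])
  also have "\<dots> = lam (a \<otimes>\<^bsub>M\<^esub> b) x"
    unfolding brace_lambda_def using a b x carrier_M by (simp add: M.m_assoc)
  finally show ?thesis .
qed

lemma lambda_one [simp]: "x \<in> carrier A \<Longrightarrow> lam \<one>\<^bsub>A\<^esub> x = x"
  unfolding brace_lambda_def by simp

lemma lambda_lambda_inv [simp]:
  "a \<in> carrier A \<Longrightarrow> x \<in> carrier A \<Longrightarrow> lam a (lam (inv\<^bsub>M\<^esub> a) x) = x"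
  using lambda_mult[of a "inv\<^bsub>M\<^esub> a" x] carrier_M M_one_eq by simp

lemma restrict:
  assumes K: "K \<subseteq> carrier A" and "group (A\<lparr>carrier := K\<rparr>)" and "group (M\<lparr>carrier := K\<rparr>)"
  shows "brace (A\<lparr>carrier := K\<rparr>) (M\<lparr>carrier := K\<rparr>)"
proof (rule brace.intro[OF assms(2,3)], rule brace_axioms.intro)
  have K_sub: "subgroup K A" using A.group_incl_imp_subgroup K assms(2) by blast
  fix a b c assume "a \<in> carrier (A\<lparr>carrier := K\<rparr>)" "b \<in> carrier (A\<lparr>carrier := K\<rparr>)"
    "c \<in> carrier (A\<lparr>carrier := K\<rparr>)"
  then show "a \<otimes>\<^bsub>M\<lparr>carrier := K\<rparr>\<^esub> (b \<otimes>\<^bsub>A\<lparr>carrier := K\<rparr>\<^esub> c) =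
      a \<otimes>\<^bsub>M\<lparr>carrier := K\<rparr>\<^esub> b \<otimes>\<^bsub>A\<lparr>carrier := K\<rparr>\<^esub> inv\<^bsub>A\<lparr>carrier := K\<rparr>\<^esub> a
        \<otimes>\<^bsub>A\<lparr>carrier := K\<rparr>\<^esub> (a \<otimes>\<^bsub>M\<lparr>carrier := K\<rparr>\<^esub> c)"
    using left_distrib[of a b c] K K_sub by auto
qed simp

end

section \<open>Trivial braces\<close>

text \<open>Unlike the usual notion of a trivial skew brace, the additive group is required to be abelian.\<close>

locale trivial_brace = A: comm_group A + M: group M for A M :: "'a monoid" +
  assumes carrier_M: "carrier M = carrier A"
    and M_mult: "\<And>x y. x \<in> carrier A \<Longrightarrow> y \<in> carrier A \<Longrightarrow> x \<otimes>\<^bsub>M\<^esub> y = x \<otimes>\<^bsub>A\<^esub> y"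
begin

lemma M_one: "\<one>\<^bsub>M\<^esub> = \<one>\<^bsub>A\<^esub>"
proof -
  have "\<one>\<^bsub>M\<^esub> = \<one>\<^bsub>A\<^esub> \<otimes>\<^bsub>A\<^esub> \<one>\<^bsub>M\<^esub>" using M.one_closed carrier_M by simp
  also have "\<dots> = \<one>\<^bsub>A\<^esub> \<otimes>\<^bsub>M\<^esub> \<one>\<^bsub>M\<^esub>"
    by (metis A.one_closed M.one_closed M_mult carrier_M)
  finally show ?thesis using carrier_M by simp
qed

lemma M_inv: "x \<in> carrier A \<Longrightarrow> inv\<^bsub>M\<^esub> x = inv\<^bsub>A\<^esub> x"
  using M.inv_equality[of "inv\<^bsub>A\<^esub> x" x] M_mult[of "inv\<^bsub>A\<^esub> x" x] M_one carrier_M by simp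

lemma is_brace: "brace A M"
proof (unfold_locales)
  fix a b c assume abc: "a \<in> carrier A" "b \<in> carrier A" "c \<in> carrier A"
  then have "a \<otimes>\<^bsub>A\<^esub> b \<otimes>\<^bsub>A\<^esub> inv\<^bsub>A\<^esub> a = b"
    using A.m_comm[of a b] by (simp add: A.m_assoc)
  with abc have "a \<otimes>\<^bsub>A\<^esub> b \<otimes>\<^bsub>A\<^esub> inv\<^bsub>A\<^esub> a \<otimes>\<^bsub>A\<^esub> (a \<otimes>\<^bsub>A\<^esub> c) = a \<otimes>\<^bsub>A\<^esub> (b \<otimes>\<^bsub>A\<^esub> c)"
    by (simp add: A.m_lcomm)
  then show "a \<otimes>\<^bsub>M\<^esub> (b \<otimes>\<^bsub>A\<^esub> c) =
      a \<otimes>\<^bsub>M\<^esub> b \<otimes>\<^bsub>A\<^esub> inv\<^bsub>A\<^esub> a \<otimes>\<^bsub>A\<^esub> (a \<otimes>\<^bsub>M\<^esub> c)"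
    using abc by (simp add: M_mult)
qed (rule carrier_M)

lemma comm_group_M: "comm_group M"
  using A.m_comm by unfold_locales (simp_all add: carrier_M M_mult)

lemma subgroup_is_ideal:
  assumes H: "subgroup H A"
  shows "brace_ideal A M H"
  unfolding brace_ideal_def
proof (intro conjI ballI)
  show "H \<lhd> A" using A.subgroup_imp_normal[OF H] .
  have "subgroup H M"
  proof (rule M.subgroupI)
    show "H \<subseteq> carrier M" using subgroup.subset[OF H] carrier_M by simp
    show "H \<noteq> {}" using subgroup.one_closed[OF H] by blast
    fix x y assume "x \<in> H" "y \<in> H"
    moreover have "x \<in> carrier A" "y \<in> carrier A" using \<open>x \<in> H\<close> \<open>y \<in> H\<close> subgroup.subset[OF H] by auto
    ultimately show "inv\<^bsub>M\<^esub> x \<in> H" "x \<otimes>\<^bsub>M\<^esub> y \<in> H"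
      by (simp_all add: M_inv M_mult subgroup.m_inv_closed[OF H] subgroup.m_closed[OF H])
  qed
  then show "H \<lhd> M" using comm_group.subgroup_imp_normal[OF comm_group_M] by blast
  fix b x assume "b \<in> carrier A" "x \<in> H"
  then show "brace_lambda A M b x \<in> H"
    using subgroup.subset[OF H] by (auto simp: brace_lambda_def M_mult A.m_assoc[symmetric])
qed

lemma abelian: "brace_abelian A M"
  unfolding brace_abelian_def brace_comm_def
proof (intro equalityI)
  have commutator: "i \<otimes>\<^bsub>A\<^esub> j \<otimes>\<^bsub>A\<^esub> inv\<^bsub>A\<^esub> i \<otimes>\<^bsub>A\<^esub> inv\<^bsub>A\<^esub> j = \<one>\<^bsub>A\<^esub>"
    if "i \<in> carrier A" "j \<in> carrier A" for i j
    using that A.commutator_eq_one_iff A.m_comm by blast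
  have "brace_comm_gens A M (carrier A) (carrier A) \<subseteq> {\<one>\<^bsub>A\<^esub>}"
    unfolding brace_comm_gens_def by (auto simp: M_mult M_inv commutator)
  then show "\<Inter> {K. brace_ideal A M K \<and> brace_comm_gens A M (carrier A) (carrier A) \<subseteq> K}
      \<subseteq> {\<one>\<^bsub>A\<^esub>}"
    using subgroup_is_ideal[OF A.triv_subgroup] by blast
  show "{\<one>\<^bsub>A\<^esub>} \<subseteq> \<Inter> {K. brace_ideal A M K \<and> brace_comm_gens A M (carrier A) (carrier A) \<subseteq> K}"
    unfolding brace_ideal_def using normal_imp_subgroup subgroup.one_closed by blast
qed

end

lemma (in brace) abelian_imp_trivial_brace:
  assumes "brace_abelian A M"
  shows "trivial_brace A M"
proof -
  have gens: "brace_comm_gens A M (carrier A) (carrier A) \<subseteq> {\<one>\<^bsub>A\<^esub>}"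
    using assms unfolding brace_abelian_def brace_comm_def by blast
  have "x \<otimes>\<^bsub>A\<^esub> y = y \<otimes>\<^bsub>A\<^esub> x" if "x \<in> carrier A" "y \<in> carrier A" for x y
    using gens that A.commutator_eq_one_iff unfolding brace_comm_gens_def by blast
  then interpret A: comm_group A by unfold_locales simp_all
  show ?thesis
  proof (unfold_locales)
    fix x y assume xy: "x \<in> carrier A" "y \<in> carrier A"
    then have "x \<otimes>\<^bsub>M\<^esub> y \<otimes>\<^bsub>A\<^esub> inv\<^bsub>A\<^esub> (x \<otimes>\<^bsub>A\<^esub> y) = \<one>\<^bsub>A\<^esub>"
      using gens unfolding brace_comm_gens_def by blast
    then show "x \<otimes>\<^bsub>M\<^esub> y = x \<otimes>\<^bsub>A\<^esub> y"
      using xy A.inv_solve_right'[of "\<one>\<^bsub>A\<^esub>" "x \<otimes>\<^bsub>M\<^esub> y" "x \<otimes>\<^bsub>A\<^esub> y"] by simp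
  qed (rule carrier_M)
qed

section \<open>Quotient braces\<close>

declare mult_FactGroup [simp del] \<comment> \<open>keep products of cosets from unfolding into set products\<close>

locale brace_quotient = brace + fixes I assumes ideal: "brace_ideal A M I"
begin

lemma normal_A: "I \<lhd> A" and normal_M: "I \<lhd> M"
  and lambda_mem: "b \<in> carrier A \<Longrightarrow> x \<in> I \<Longrightarrow> lam b x \<in> I"
  using ideal unfolding brace_ideal_def by auto

lemma ideal_subset: "I \<subseteq> carrier A"
  using normal_A normal_imp_subgroup subgroup.subset by blast

lemma lambda_image: "a \<in> carrier A \<Longrightarrow> lam a ` I = I"
proof (intro equalityI subsetI)
  fix y assume a: "a \<in> carrier A" and y: "y \<in> I"
  then have "y = lam a (lam (inv\<^bsub>M\<^esub> a) y)" using ideal_subset by auto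
  moreover have "lam (inv\<^bsub>M\<^esub> a) y \<in> I" using lambda_mem a y by simp
  ultimately show "y \<in> lam a ` I" by blast
qed (use lambda_mem in auto)

text \<open>a \<cdot> i = a + \<lambda> a i, and \<lambda> a permutes I.\<close>

lemma rcos_M_eq_rcos_A:
  assumes a: "a \<in> carrier A"
  shows "I #>\<^bsub>M\<^esub> a = I #>\<^bsub>A\<^esub> a"
proof -
  have "I #>\<^bsub>M\<^esub> a = (\<lambda>i. a \<otimes>\<^bsub>M\<^esub> i) ` I"
    using normal.coset_eq[OF normal_M] a carrier_M unfolding l_coset_def by auto
  also have "\<dots> = (\<lambda>y. a \<otimes>\<^bsub>A\<^esub> y) ` lam a ` I"
    using a ideal_subset by (force simp: M_mult_eq_A_mult_lambda)
  also have "\<dots> = I #>\<^bsub>A\<^esub> a"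
    using normal.coset_eq[OF normal_A] a unfolding lambda_image[OF a] l_coset_def by auto
  finally show ?thesis .
qed

definition proj :: "'a \<Rightarrow> 'a set" where "proj x = I #>\<^bsub>A\<^esub> x"

lemma group_Mod_A: "group (A Mod I)" and group_Mod_M: "group (M Mod I)"
  using normal.factorgroup_is_group normal_A normal_M by blast+

lemma carrier_Mod_A: "carrier (A Mod I) = proj ` carrier A"
  unfolding carrier_FactGroup proj_def by simp

lemma carrier_Mod_M: "carrier (M Mod I) = carrier (A Mod I)"
  unfolding carrier_FactGroup using rcos_M_eq_rcos_A carrier_M by (auto simp: image_def)

lemma hom_A: "group_hom A (A Mod I) proj"
  using group_Mod_A normal.r_coset_hom_Mod[OF normal_A]
  unfolding group_hom_def group_hom_axioms_def proj_def by (auto intro: A.group_axioms)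

lemma hom_M: "group_hom M (M Mod I) proj"
proof -
  have "proj \<in> hom M (M Mod I)"
    using normal.r_coset_hom_Mod[OF normal_M] rcos_M_eq_rcos_A carrier_M
    unfolding hom_def Pi_def proj_def by auto
  then show ?thesis
    unfolding group_hom_def group_hom_axioms_def using group_Mod_M M.group_axioms by auto
qed

lemma proj_closed [simp]: "x \<in> carrier A \<Longrightarrow> proj x \<in> carrier (A Mod I)"
  using carrier_Mod_A by auto

lemma proj_mult_A:
  "x \<in> carrier A \<Longrightarrow> y \<in> carrier A \<Longrightarrow> proj (x \<otimes>\<^bsub>A\<^esub> y) = proj x \<otimes>\<^bsub>A Mod I\<^esub> proj y"
  using group_hom.hom_mult[OF hom_A] by simp

lemma proj_mult_M:
  "x \<in> carrier A \<Longrightarrow> y \<in> carrier A \<Longrightarrow> proj (x \<otimes>\<^bsub>M\<^esub> y) = proj x \<otimes>\<^bsub>M Mod I\<^esub> proj y"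
  using group_hom.hom_mult[OF hom_M] carrier_M by simp

lemma proj_inv_A: "x \<in> carrier A \<Longrightarrow> proj (inv\<^bsub>A\<^esub> x) = inv\<^bsub>A Mod I\<^esub> proj x"
  using group_hom.hom_inv[OF hom_A] by simp

lemma proj_one [simp]: "proj \<one>\<^bsub>A\<^esub> = \<one>\<^bsub>A Mod I\<^esub>"
  using group_hom.hom_one[OF hom_A] by simp

lemma proj_lambda:
  "b \<in> carrier A \<Longrightarrow> x \<in> carrier A \<Longrightarrow>
    proj (lam b x) = brace_lambda (A Mod I) (M Mod I) (proj b) (proj x)"
  unfolding brace_lambda_def by (simp add: proj_mult_A proj_mult_M proj_inv_A)

lemma proj_eq_one_iff: "x \<in> carrier A \<Longrightarrow> proj x = \<one>\<^bsub>A Mod I\<^esub> \<longleftrightarrow> x \<in> I"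
  using group_hom.hom_one[OF hom_A] A.rcos_self[of x I] normal_imp_subgroup[OF normal_A]
    subgroup.rcos_const[OF normal_imp_subgroup[OF normal_A] A.group_axioms]
  unfolding proj_def by auto

lemma subset_ideal_if_proj_image_one:
  assumes S: "S \<subseteq> carrier A" and one: "proj ` S = {\<one>\<^bsub>A Mod I\<^esub>}"
  shows "S \<subseteq> I"
proof
  fix x assume x: "x \<in> S"
  then have "proj x = \<one>\<^bsub>A Mod I\<^esub>" using one by blast
  then show "x \<in> I" using proj_eq_one_iff[of x] S x by auto
qed

lemma proj_eq_iff:
  assumes "x \<in> carrier A" "y \<in> carrier A"
  shows "proj x = proj y \<longleftrightarrow> x \<otimes>\<^bsub>A\<^esub> inv\<^bsub>A\<^esub> y \<in> I"
proof -
  interpret Q: group "A Mod I" by (rule group_Mod_A)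
  have "proj x = proj y \<longleftrightarrow> proj (x \<otimes>\<^bsub>A\<^esub> inv\<^bsub>A\<^esub> y) = \<one>\<^bsub>A Mod I\<^esub>"
    using assms Q.inv_solve_right'[of "\<one>\<^bsub>A Mod I\<^esub>" "proj x" "proj y"]
    by (simp add: proj_mult_A proj_inv_A del: one_FactGroup)
  then show ?thesis using assms proj_eq_one_iff by simp
qed

lemma brace_Mod: "brace (A Mod I) (M Mod I)"
proof (intro brace.intro brace_axioms.intro group_Mod_A group_Mod_M carrier_Mod_M)
  fix p q r assume "p \<in> carrier (A Mod I)" "q \<in> carrier (A Mod I)" "r \<in> carrier (A Mod I)"
  then obtain a b c where abc: "a \<in> carrier A" "b \<in> carrier A" "c \<in> carrier A"
    and pqr: "p = proj a" "q = proj b" "r = proj c"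
    unfolding carrier_Mod_A by blast
  have "proj (a \<otimes>\<^bsub>M\<^esub> (b \<otimes>\<^bsub>A\<^esub> c)) =
      proj ((a \<otimes>\<^bsub>M\<^esub> b) \<otimes>\<^bsub>A\<^esub> inv\<^bsub>A\<^esub> a \<otimes>\<^bsub>A\<^esub> (a \<otimes>\<^bsub>M\<^esub> c))"
    using left_distrib[OF abc] by simp
  then show "p \<otimes>\<^bsub>M Mod I\<^esub> (q \<otimes>\<^bsub>A Mod I\<^esub> r) =
      p \<otimes>\<^bsub>M Mod I\<^esub> q \<otimes>\<^bsub>A Mod I\<^esub> inv\<^bsub>A Mod I\<^esub> p \<otimes>\<^bsub>A Mod I\<^esub> (p \<otimes>\<^bsub>M Mod I\<^esub> r)"
    using abc unfolding pqr by (simp add: proj_mult_A proj_mult_M proj_inv_A)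
qed

lemma ideal_vimage:
  assumes H: "brace_ideal (A Mod I) (M Mod I) H"
  shows "brace_ideal A M {b \<in> carrier A. proj b \<in> H}"
  unfolding brace_ideal_def
proof (intro conjI ballI)
  show "{b \<in> carrier A. proj b \<in> H} \<lhd> A"
    using group_hom.normal_vimage[OF hom_A] H unfolding brace_ideal_def by blast
  show "{b \<in> carrier A. proj b \<in> H} \<lhd> M"
    using group_hom.normal_vimage[OF hom_M] H carrier_M unfolding brace_ideal_def by auto
  fix b s assume "b \<in> carrier A" "s \<in> {b \<in> carrier A. proj b \<in> H}"
  then show "lam b s \<in> {b \<in> carrier A. proj b \<in> H}"
    using H unfolding brace_ideal_def by (simp add: proj_lambda)
qed

lemma ideal_image:
  assumes K: "K \<subseteq> carrier A" and onto: "proj ` K = carrier (A Mod I)"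
    and J: "brace_ideal (A\<lparr>carrier := K\<rparr>) (M\<lparr>carrier := K\<rparr>) J"
  shows "brace_ideal (A Mod I) (M Mod I) (proj ` J)"
  unfolding brace_ideal_def
proof (intro conjI ballI)
  have J_A: "J \<lhd> A\<lparr>carrier := K\<rparr>" and J_M: "J \<lhd> M\<lparr>carrier := K\<rparr>"
    and J_lambda: "\<And>x j. x \<in> K \<Longrightarrow> j \<in> J \<Longrightarrow>
      brace_lambda (A\<lparr>carrier := K\<rparr>) (M\<lparr>carrier := K\<rparr>) x j \<in> J"
    using J unfolding brace_ideal_def by auto
  have K_A: "subgroup K A"
    using A.group_incl_imp_subgroup K J_A by (simp add: normal_def)
  have K_M: "subgroup K M"
    using M.group_incl_imp_subgroup K J_M carrier_M by (simp add: normal_def)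
  show "proj ` J \<lhd> A Mod I"
    using normal.surj_hom_normal_subgroup[OF J_A group_hom.induced_group_hom'[OF hom_A K_A]] onto
    by simp
  show "proj ` J \<lhd> M Mod I"
    using normal.surj_hom_normal_subgroup[OF J_M group_hom.induced_group_hom'[OF hom_M K_M]] onto
    by (simp add: carrier_Mod_M)
  fix p q assume "p \<in> carrier (A Mod I)" "q \<in> proj ` J"
  then obtain x j where x: "x \<in> K" "p = proj x" and j: "j \<in> J" "q = proj j"
    using onto by blast
  have j_K: "j \<in> K" using j(1) normal_imp_subgroup[OF J_A] subgroup.subset by force
  have "brace_lambda (A\<lparr>carrier := K\<rparr>) (M\<lparr>carrier := K\<rparr>) x j = lam x j"
    unfolding brace_lambda_def using A.m_inv_consistent[OF K_A x(1)] by simp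
  then have "lam x j \<in> J" using J_lambda[OF x(1) j(1)] by simp
  moreover have "brace_lambda (A Mod I) (M Mod I) p q = proj (lam x j)"
    using x j_K K j(2) proj_lambda[of x j] by (simp add: subsetD)
  ultimately show "brace_lambda (A Mod I) (M Mod I) p q \<in> proj ` J" by blast
qed

lemma trivial_brace_ModD:
  assumes "trivial_brace (A Mod I) (M Mod I)" and x: "x \<in> carrier A" and y: "y \<in> carrier A"
  shows "x \<otimes>\<^bsub>M\<^esub> y \<otimes>\<^bsub>A\<^esub> inv\<^bsub>A\<^esub> (x \<otimes>\<^bsub>A\<^esub> y) \<in> I"
    and "x \<otimes>\<^bsub>A\<^esub> y \<otimes>\<^bsub>A\<^esub> inv\<^bsub>A\<^esub> (y \<otimes>\<^bsub>A\<^esub> x) \<in> I"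
proof -
  interpret Q: trivial_brace "A Mod I" "M Mod I" by fact
  have "proj (x \<otimes>\<^bsub>M\<^esub> y) = proj (x \<otimes>\<^bsub>A\<^esub> y)"
    using x y by (simp add: proj_mult_A proj_mult_M Q.M_mult)
  then show "x \<otimes>\<^bsub>M\<^esub> y \<otimes>\<^bsub>A\<^esub> inv\<^bsub>A\<^esub> (x \<otimes>\<^bsub>A\<^esub> y) \<in> I"
    using proj_eq_iff[of "x \<otimes>\<^bsub>M\<^esub> y" "x \<otimes>\<^bsub>A\<^esub> y"] x y by simp
  have "proj (x \<otimes>\<^bsub>A\<^esub> y) = proj (y \<otimes>\<^bsub>A\<^esub> x)"
    using x y by (simp add: proj_mult_A Q.A.m_comm)
  then show "x \<otimes>\<^bsub>A\<^esub> y \<otimes>\<^bsub>A\<^esub> inv\<^bsub>A\<^esub> (y \<otimes>\<^bsub>A\<^esub> x) \<in> I"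
    using proj_eq_iff[of "x \<otimes>\<^bsub>A\<^esub> y" "y \<otimes>\<^bsub>A\<^esub> x"] x y by simp
qed

lemma trivial_brace_ModI:
  assumes K: "K \<subseteq> carrier A" and onto: "proj ` K = carrier (A Mod I)"
    and mult: "\<And>x y. x \<in> K \<Longrightarrow> y \<in> K \<Longrightarrow> x \<otimes>\<^bsub>M\<^esub> y \<otimes>\<^bsub>A\<^esub> inv\<^bsub>A\<^esub> (x \<otimes>\<^bsub>A\<^esub> y) \<in> I"
    and comm: "\<And>x y. x \<in> K \<Longrightarrow> y \<in> K \<Longrightarrow> x \<otimes>\<^bsub>A\<^esub> y \<otimes>\<^bsub>A\<^esub> inv\<^bsub>A\<^esub> (y \<otimes>\<^bsub>A\<^esub> x) \<in> I"
  shows "trivial_brace (A Mod I) (M Mod I)"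
proof -
  have lift: "\<exists>x\<in>K. p = proj x" if "p \<in> carrier (A Mod I)" for p
    using that onto by (metis imageE)
  have comm_Q: "comm_group (A Mod I)"
  proof (rule group.group_comm_groupI[OF group_Mod_A])
    fix p q assume "p \<in> carrier (A Mod I)" "q \<in> carrier (A Mod I)"
    then obtain x y where xy: "x \<in> K" "y \<in> K" and pq: "p = proj x" "q = proj y"
      using lift by blast
    have xy_A: "x \<in> carrier A" "y \<in> carrier A" using xy K by auto
    have "proj (x \<otimes>\<^bsub>A\<^esub> y) = proj (y \<otimes>\<^bsub>A\<^esub> x)"
      using comm[OF xy] proj_eq_iff[of "x \<otimes>\<^bsub>A\<^esub> y" "y \<otimes>\<^bsub>A\<^esub> x"] xy_A by simp
    then show "p \<otimes>\<^bsub>A Mod I\<^esub> q = q \<otimes>\<^bsub>A Mod I\<^esub> p"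
      using xy_A unfolding pq by (simp add: proj_mult_A)
  qed
  have mult_Q: "p \<otimes>\<^bsub>M Mod I\<^esub> q = p \<otimes>\<^bsub>A Mod I\<^esub> q"
    if pq_Q: "p \<in> carrier (A Mod I)" "q \<in> carrier (A Mod I)" for p q
  proof -
    obtain x y where xy: "x \<in> K" "y \<in> K" and pq: "p = proj x" "q = proj y"
      using lift pq_Q by blast
    have xy_A: "x \<in> carrier A" "y \<in> carrier A" using xy K by auto
    have "proj (x \<otimes>\<^bsub>M\<^esub> y) = proj (x \<otimes>\<^bsub>A\<^esub> y)"
      using mult[OF xy] proj_eq_iff[of "x \<otimes>\<^bsub>M\<^esub> y" "x \<otimes>\<^bsub>A\<^esub> y"] xy_A by simp
    then show ?thesis
      using xy_A unfolding pq by (simp add: proj_mult_A proj_mult_M)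
  qed
  show ?thesis
    using trivial_brace.intro[OF comm_Q group_Mod_M trivial_brace_axioms.intro[OF carrier_Mod_M]]
      mult_Q by blast
qed

end

lemma (in brace_quotient) trivial_brace_Mod_if_abelian_section:
  assumes K: "K \<subseteq> carrier A" and onto: "proj ` K = carrier (A Mod I)"
    and J: "brace_ideal (A\<lparr>carrier := K\<rparr>) (M\<lparr>carrier := K\<rparr>) J" and "J \<subseteq> I"
    and abelian: "brace_abelian (A\<lparr>carrier := K\<rparr> Mod J) (M\<lparr>carrier := K\<rparr> Mod J)"
  shows "trivial_brace (A Mod I) (M Mod I)"
proof -
  have gA: "group (A\<lparr>carrier := K\<rparr>)" and gM: "group (M\<lparr>carrier := K\<rparr>)"
    using J unfolding brace_ideal_def normal_def by auto
  interpret KJ: brace_quotient "A\<lparr>carrier := K\<rparr>" "M\<lparr>carrier := K\<rparr>" J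
    using restrict[OF K gA gM] J by (simp add: brace_quotient_def brace_quotient_axioms_def)
  have K_A: "subgroup K A" using A.group_incl_imp_subgroup[OF K gA] .
  have trivial: "trivial_brace (A\<lparr>carrier := K\<rparr> Mod J) (M\<lparr>carrier := K\<rparr> Mod J)"
    using brace.abelian_imp_trivial_brace[OF KJ.brace_Mod abelian] .
  show ?thesis
  proof (rule trivial_brace_ModI[OF K onto])
    fix x y assume "x \<in> K" "y \<in> K"
    then show "x \<otimes>\<^bsub>M\<^esub> y \<otimes>\<^bsub>A\<^esub> inv\<^bsub>A\<^esub> (x \<otimes>\<^bsub>A\<^esub> y) \<in> I"
      and "x \<otimes>\<^bsub>A\<^esub> y \<otimes>\<^bsub>A\<^esub> inv\<^bsub>A\<^esub> (y \<otimes>\<^bsub>A\<^esub> x) \<in> I"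
      using KJ.trivial_brace_ModD[OF trivial, of x y] subgroup.m_closed[OF K_A] K_A \<open>J \<subseteq> I\<close>
      by auto
  qed
qed

section \<open>Quotients by maximal ideals\<close>

locale brace_maximal_quotient = brace_quotient +
  assumes maximal: "brace_maximal_ideal A M I"
begin

lemma Mod_nontrivial: "carrier (A Mod I) \<noteq> {\<one>\<^bsub>A Mod I\<^esub>}"
proof
  assume "carrier (A Mod I) = {\<one>\<^bsub>A Mod I\<^esub>}"
  then have "carrier A \<subseteq> I" using proj_closed proj_eq_one_iff by blast
  then show False using maximal ideal_subset unfolding brace_maximal_ideal_def by blast
qed

lemma Mod_ideal_cases:
  assumes H: "brace_ideal (A Mod I) (M Mod I) H"
  shows "H = {\<one>\<^bsub>A Mod I\<^esub>} \<or> H = carrier (A Mod I)"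
proof -
  let ?S = "{b \<in> carrier A. proj b \<in> H}"
  have H_sub: "H \<subseteq> carrier (A Mod I)" and one_H: "\<one>\<^bsub>A Mod I\<^esub> \<in> H"
    using H normal_imp_subgroup subgroup.subset subgroup.one_closed
    unfolding brace_ideal_def by blast+
  have "I \<subseteq> ?S"
  proof
    fix x assume "x \<in> I"
    then have "x \<in> carrier A" "proj x = \<one>\<^bsub>A Mod I\<^esub>"
      using ideal_subset proj_eq_one_iff by auto
    then show "x \<in> ?S" using one_H by simp
  qed
  then have "?S = I \<or> ?S = carrier A"
    using maximal ideal_vimage[OF H] unfolding brace_maximal_ideal_def by blast
  then show ?thesis
  proof
    assume "?S = I"
    have "H \<subseteq> {\<one>\<^bsub>A Mod I\<^esub>}"
    proof
      fix p assume "p \<in> H"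
      moreover obtain b where "b \<in> carrier A" "p = proj b"
        using H_sub \<open>p \<in> H\<close> unfolding carrier_Mod_A by blast
      ultimately have "b \<in> I" using \<open>?S = I\<close> by blast
      then show "p \<in> {\<one>\<^bsub>A Mod I\<^esub>}" using \<open>b \<in> carrier A\<close> \<open>p = proj b\<close> proj_eq_one_iff by simp
    qed
    with one_H show ?thesis by blast
  next
    assume "?S = carrier A"
    then have "carrier (A Mod I) \<subseteq> H" unfolding carrier_Mod_A by blast
    with H_sub show ?thesis by blast
  qed
qed

lemma soluble_imp_abelian_section:
  assumes "brace_soluble A M"
  obtains K J where "K \<subseteq> carrier A" "proj ` K = carrier (A Mod I)"
    "brace_ideal (A\<lparr>carrier := K\<rparr>) (M\<lparr>carrier := K\<rparr>) J" "J \<subseteq> I"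
    "brace_abelian (A\<lparr>carrier := K\<rparr> Mod J) (M\<lparr>carrier := K\<rparr> Mod J)"
proof -
  obtain n and N :: "nat \<Rightarrow> 'a set" where N0: "N 0 = carrier A" and Nn: "N n = {\<one>\<^bsub>A\<^esub>}"
    and chain: "\<And>i. i < n \<Longrightarrow> N (Suc i) \<subseteq> N i \<and>
        brace_ideal (A\<lparr>carrier := N i\<rparr>) (M\<lparr>carrier := N i\<rparr>) (N (Suc i)) \<and>
        brace_abelian (A\<lparr>carrier := N i\<rparr> Mod N (Suc i)) (M\<lparr>carrier := N i\<rparr> Mod N (Suc i))"
    using assms unfolding brace_soluble_def by blast
  have N_sub: "N k \<subseteq> carrier A" if "k \<le> n" for k
    using that
  proof (induction k)
    case (Suc k)
    then show ?case using chain[of k] by auto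
  qed (simp add: N0)
  define onto where "onto k \<longleftrightarrow> proj ` N k = carrier (A Mod I)" for k
  have "onto 0" unfolding onto_def N0 carrier_Mod_A ..
  moreover have "\<not> onto n" using Mod_nontrivial unfolding onto_def Nn by simp
  ultimately obtain k where k: "k < n" "onto k" "\<not> onto (Suc k)"
    using first_failure_step by blast
  have K: "N k \<subseteq> carrier A" and J_sub: "N (Suc k) \<subseteq> carrier A"
    using N_sub k(1) by simp_all
  have K_onto: "proj ` N k = carrier (A Mod I)" and J_not_onto: "proj ` N (Suc k) \<noteq> carrier (A Mod I)"
    using k(2,3) unfolding onto_def by simp_all
  have J: "brace_ideal (A\<lparr>carrier := N k\<rparr>) (M\<lparr>carrier := N k\<rparr>) (N (Suc k))"
    and abelian: "brace_abelian (A\<lparr>carrier := N k\<rparr> Mod N (Suc k)) (M\<lparr>carrier := N k\<rparr> Mod N (Suc k))"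
    using chain[OF k(1)] by simp_all
  have "proj ` N (Suc k) = {\<one>\<^bsub>A Mod I\<^esub>}"
    using Mod_ideal_cases[OF ideal_image[OF K K_onto J]] J_not_onto by blast
  then have "N (Suc k) \<subseteq> I" using subset_ideal_if_proj_image_one J_sub by blast
  then show ?thesis using that[OF K K_onto J _ abelian] by blast
qed

end

theorem corollary4p6:
  fixes A M :: "'a monoid" and I :: "'a set"
  assumes "skew_brace A M"
    and "brace_soluble A M"
    and "brace_maximal_ideal A M I"
  shows "skew_brace (A Mod I) (M Mod I) \<and> brace_abelian (A Mod I) (M Mod I)
    \<and> carrier (A Mod I) = carrier (M Mod I)
    \<and> (\<forall>x\<in>carrier (A Mod I). \<forall>y\<in>carrier (A Mod I).
          x \<otimes>\<^bsub>A Mod I\<^esub> y = x \<otimes>\<^bsub>M Mod I\<^esub> y)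
    \<and> cyclic_group (A Mod I) \<and> Factorial_Ring.prime (order (A Mod I))"
proof -
  interpret brace_maximal_quotient A M I
    using assms(1,3) unfolding brace_maximal_quotient_def brace_maximal_quotient_axioms_def
      brace_quotient_def brace_quotient_axioms_def brace_iff_skew_brace brace_maximal_ideal_def
    by blast
  obtain K J where "K \<subseteq> carrier A" "proj ` K = carrier (A Mod I)"
    "brace_ideal (A\<lparr>carrier := K\<rparr>) (M\<lparr>carrier := K\<rparr>) J" "J \<subseteq> I"
    "brace_abelian (A\<lparr>carrier := K\<rparr> Mod J) (M\<lparr>carrier := K\<rparr> Mod J)"
    using soluble_imp_abelian_section[OF assms(2)] .
  then interpret Q: trivial_brace "A Mod I" "M Mod I"
    by (rule trivial_brace_Mod_if_abelian_section)
  have "cyclic_group (A Mod I) \<and> Factorial_Ring.prime (order (A Mod I))"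
    using Q.A.prime_cyclic_if_no_proper_subgroups Mod_nontrivial Mod_ideal_cases
      Q.subgroup_is_ideal by blast
  then show ?thesis
    using Q.is_brace Q.abelian Q.carrier_M Q.M_mult by (simp add: brace_iff_skew_brace)
qed

end
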